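(* Let $G=(V,E)$ be a finite graph and consider the graphical representation of the rescaled SEIS process on $G$ with parameters $\lambda>0,\tau>0$. Then for each $T>0$, with probability tending to $1$ as $\tau\to\infty$, the following holds: for every onset label $\star$ at a point $(x,t)\in\mathcal{S}$ with $t\le T$ there is a $t'>t$ and a recovery label $\times$ at $(x,t')$ such that there are no onset labels in $V\times(t,t']$.
   Context: The spacetime set is $\mathcal{S}=V\times[0,\infty)$. The graphical representation of the rescaled SEIS process consists of independent Poisson point processes along the fibres: at each site $x\in V$, recovery labels $\times$ with intensity $\tau$ and onset labels $\star$ with intensity $1$; along each edge $xy\in E$, transmission labels $\leftrightarrow$ with intensity $\lambda\tau$. *)

theory Defs
  imports "HOL-Probability.Probability"
begin

text \<open>Fibres of the graphical representation: recovery labels and onset labels at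
  a site, transmission labels along an (unordered) edge.\<close>
datatype 'v fibre = Rec 'v | Ons 'v | Tr "'v set"

definition finite_graph :: "'v set \<Rightarrow> 'v set set \<Rightarrow> bool" where
  "finite_graph V E \<longleftrightarrow> finite V \<and> (\<forall>e\<in>E. e \<subseteq> V \<and> card e = 2)"

definition ppp_family ::
  "'w measure \<Rightarrow> 'i set \<Rightarrow> ('i \<Rightarrow> real) \<Rightarrow> ('i \<Rightarrow> 'w \<Rightarrow> real set) \<Rightarrow> bool" where
  "ppp_family M I r N \<longleftrightarrow>
     prob_space M \<and>
     (\<forall>i\<in>I. \<forall>\<omega>\<in>space M. N i \<omega> \<subseteq> {0<..} \<and> (\<forall>b. finite (N i \<omega> \<inter> {..b}))) \<and>
     (\<forall>i\<in>I. \<forall>a b. 0 \<le> a \<longrightarrow> a < b \<longrightarrow>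
        distr M (count_space UNIV) (\<lambda>\<omega>. card (N i \<omega> \<inter> {a<..b}))
          = measure_pmf (poisson_pmf (r i * (b - a)))) \<and>
     (\<forall>J. J \<subseteq> {(i, a, b). i \<in> I \<and> 0 \<le> a \<and> a < b} \<longrightarrow>
        (\<forall>(i, a, b)\<in>J. \<forall>(i', a', b')\<in>J. (i, a, b) \<noteq> (i', a', b') \<longrightarrow> i = i' \<longrightarrow>
            {a<..b} \<inter> {a'<..b'} = {}) \<longrightarrow>
        prob_space.indep_vars M (\<lambda>_. count_space UNIV)
          (\<lambda>(i, a, b) \<omega>. card (N i \<omega> \<inter> {a<..b})) J)"

definition graphical_rep ::
  "'w measure \<Rightarrow> 'v set \<Rightarrow> 'v set set \<Rightarrow> real \<Rightarrow> real \<Rightarrow> ('v fibre \<Rightarrow> 'w \<Rightarrow> real set) \<Rightarrow> bool" where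
  "graphical_rep M V E lam \<tau> N \<longleftrightarrow>
     ppp_family M (Rec ` V \<union> Ons ` V \<union> Tr ` E)
       (\<lambda>i. case i of Rec _ \<Rightarrow> \<tau> | Ons _ \<Rightarrow> 1 | Tr _ \<Rightarrow> lam * \<tau>) N"

end

theory Submission
  imports Defs "HOL-Real_Asymp.Real_Asymp"
begin

text \<open>Cut \<open>[0, T]\<close> into windows of length \<open>h = 1 / sqrt \<tau>\<close>. If an onset at \<open>x\<close> in window
  \<open>k\<close> is not followed by a recovery at \<open>x\<close> before the next onset anywhere, then either \<open>x\<close> has
  no recovery label in window \<open>k + 1\<close>, which has probability \<open>exp (- \<tau> h) = exp (- sqrt \<tau>)\<close>,
  or windows \<open>k\<close> and \<open>k + 1\<close> together carry two onsets (at \<open>x\<close> and at some \<open>y\<close>), which has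
  probability at most \<open>(2 h)^2 = 4 / \<tau>\<close>. A union bound over the \<open>O(T sqrt \<tau>)\<close> windows and
  the \<open>|V|^2\<close> pairs of sites bounds the failure probability by
  \<open>O(T |V|^2 (sqrt \<tau> exp (- sqrt \<tau>) + 1 / sqrt \<tau>))\<close>, which tends to \<open>0\<close>.

  The event is measurable because a quantifier over the points of a locally finite random set of
  reals can be replaced by a countable quantifier over its increasing enumeration, whose entries
  are measurable since the counts \<open>card (A \<inter> {..v})\<close> are.\<close>

lemma Int_atMost_Max:
  fixes A :: "'a::linorder set"
  assumes "finite (A \<inter> {..v})" "A \<inter> {..v} \<noteq> {}"
  shows "A \<inter> {..Max (A \<inter> {..v})} = A \<inter> {..v}"
  using assms Max_in[OF assms] Max_ge[OF assms(1)] by fastforce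

lemma LeastI_finite_atMost:
  fixes A :: "'a::linorder set"
  assumes fin: "finite (A \<inter> {..b})" and t0: "t0 \<in> A" "t0 \<le> b" "P t0"
  shows "(LEAST t. t \<in> A \<and> P t) \<in> A" "P (LEAST t. t \<in> A \<and> P t)"
    and "t \<in> A \<Longrightarrow> P t \<Longrightarrow> (LEAST t. t \<in> A \<and> P t) \<le> t"
proof -
  define C where "C = {t \<in> A \<inter> {..b}. P t}"
  have "finite C" using fin unfolding C_def by (rule rev_finite_subset) auto
  moreover have "t0 \<in> C" using t0 unfolding C_def by auto
  ultimately have m: "Min C \<in> C" and mle: "\<And>t. t \<in> C \<Longrightarrow> Min C \<le> t"
    using Min_in by auto
  have least: "(LEAST t. t \<in> A \<and> P t) = Min C"
  proof (rule Least_equality)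
    show "Min C \<in> A \<and> P (Min C)" using m unfolding C_def by auto
    fix t assume "t \<in> A \<and> P t"
    then show "Min C \<le> t" using mle[of t] m unfolding C_def by force
  qed
  show "(LEAST t. t \<in> A \<and> P t) \<in> A" "P (LEAST t. t \<in> A \<and> P t)"
    using m unfolding least C_def by auto
  show "t \<in> A \<Longrightarrow> P t \<Longrightarrow> (LEAST t. t \<in> A \<and> P t) \<le> t"
    using mle[of t] m unfolding least C_def by force
qed

definition has_point :: "real set \<Rightarrow> nat \<Rightarrow> bool" where
  "has_point A k \<longleftrightarrow> (\<exists>n::nat. k < card (A \<inter> {..real n}))"

text \<open>\<open>kth_point A k\<close> is the point of rank \<open>k\<close>, counting from \<open>0\<close>, in the increasing
  enumeration of \<open>A\<close>; it is \<open>0\<close> when \<open>A\<close> has at most \<open>k\<close> points.\<close>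
definition kth_point :: "real set \<Rightarrow> nat \<Rightarrow> real" where
  "kth_point A k = (if has_point A k then LEAST t. t \<in> A \<and> k < card (A \<inter> {..t}) else 0)"

lemma
  assumes fin: "\<And>b. finite (A \<inter> {..b})" and k: "has_point A k"
  shows kth_point_in: "kth_point A k \<in> A"
    and kth_point_le_iff: "kth_point A k \<le> v \<longleftrightarrow> k < card (A \<inter> {..v})"
proof -
  obtain n where kn: "k < card (A \<inter> {..real n})" using k has_point_def by auto
  then have ne: "A \<inter> {..real n} \<noteq> {}" by auto
  let ?m = "Max (A \<inter> {..real n})"
  have "?m \<in> A" "?m \<le> real n" "k < card (A \<inter> {..?m})"
    using Max_in[OF fin ne] kn Int_atMost_Max[OF fin ne] by auto
  note least = LeastI_finite_atMost[of A "real n" _ "\<lambda>t. k < card (A \<inter> {..t})", OF fin this]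
  have kth: "kth_point A k = (LEAST t. t \<in> A \<and> k < card (A \<inter> {..t}))"
    using k kth_point_def by simp
  show "kth_point A k \<in> A" using least(1) kth by simp
  show "kth_point A k \<le> v \<longleftrightarrow> k < card (A \<inter> {..v})"
  proof
    assume "kth_point A k \<le> v"
    then have "card (A \<inter> {..kth_point A k}) \<le> card (A \<inter> {..v})"
      by (intro card_mono fin) auto
    then show "k < card (A \<inter> {..v})" using least(2) kth by simp
  next
    assume kv: "k < card (A \<inter> {..v})"
    then have nev: "A \<inter> {..v} \<noteq> {}" by auto
    let ?u = "Max (A \<inter> {..v})"
    have "kth_point A k \<le> ?u"
      using least(3)[of ?u] Max_in[OF fin nev] Int_atMost_Max[OF fin nev] kv kth by auto
    also have "?u \<le> v" using Max_in[OF fin nev] by auto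
    finally show "kth_point A k \<le> v" .
  qed
qed

lemma Ball_points_iff:
  assumes fin: "\<And>b. finite (A \<inter> {..b})"
  shows "(\<forall>t\<in>A. P t) \<longleftrightarrow> (\<forall>k. has_point A k \<longrightarrow> P (kth_point A k))"
proof (intro iffI allI impI ballI)
  fix t assume "t \<in> A" and H: "\<forall>k. has_point A k \<longrightarrow> P (kth_point A k)"
  define k where "k = card (A \<inter> {..t}) - 1"
  have pos: "0 < card (A \<inter> {..t})" using \<open>t \<in> A\<close> fin card_gt_0_iff by fastforce
  have "card (A \<inter> {..t}) \<le> card (A \<inter> {..real (nat \<lceil>t\<rceil>)})"
    by (intro card_mono fin) (auto intro: order_trans[OF _ real_nat_ceiling_ge])
  then have hk: "has_point A k" unfolding has_point_def k_def using pos
    by (metis diff_less less_le_trans zero_less_one)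
  have le: "kth_point A k \<le> t" using kth_point_le_iff[OF fin hk] pos k_def by simp
  have "kth_point A k = t"
  proof (rule ccontr)
    assume "kth_point A k \<noteq> t"
    then have "t \<notin> A \<inter> {..kth_point A k}" using le by auto
    then have "A \<inter> {..kth_point A k} \<subset> A \<inter> {..t}" using le \<open>t \<in> A\<close> by fastforce
    then have "card (A \<inter> {..kth_point A k}) < card (A \<inter> {..t})" by (intro psubset_card_mono fin)
    then show False using kth_point_le_iff[OF fin hk, of "kth_point A k"] k_def by simp
  qed
  then show "P t" using H hk by metis
qed (use kth_point_in[OF fin] in blast)

definition random_locally_finite_set :: "'w measure \<Rightarrow> ('w \<Rightarrow> real set) \<Rightarrow> bool" where
  "random_locally_finite_set M A \<longleftrightarrow>
     (\<forall>\<omega>\<in>space M. \<forall>b. finite (A \<omega> \<inter> {..b})) \<and>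
     (\<forall>v. (\<lambda>\<omega>. card (A \<omega> \<inter> {..v})) \<in> measurable M (count_space UNIV))"

context
  fixes M :: "'w measure" and A :: "'w \<Rightarrow> real set"
  assumes A: "random_locally_finite_set M A"
begin

lemma measurable_card_atMost[measurable]:
  "(\<lambda>\<omega>. card (A \<omega> \<inter> {..v})) \<in> measurable M (count_space UNIV)"
  using A unfolding random_locally_finite_set_def by blast

lemma pred_has_point[measurable]: "Measurable.pred M (\<lambda>\<omega>. has_point (A \<omega>) k)"
  unfolding has_point_def by measurable

lemma borel_measurable_kth_point[measurable]:
  "(\<lambda>\<omega>. kth_point (A \<omega>) k) \<in> borel_measurable M"
  unfolding borel_measurable_iff_le
proof
  fix a
  have "{\<omega> \<in> space M. kth_point (A \<omega>) k \<le> a} =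
    {\<omega> \<in> space M. if has_point (A \<omega>) k then k < card (A \<omega> \<inter> {..a}) else 0 \<le> a}"
    using A kth_point_le_iff unfolding random_locally_finite_set_def
    by (auto simp: kth_point_def)
  also have "\<dots> \<in> sets M" by measurable
  finally show "{\<omega> \<in> space M. kth_point (A \<omega>) k \<le> a} \<in> sets M" .
qed

lemma pred_Ball_points:
  assumes "\<And>k. Measurable.pred M (\<lambda>\<omega>. P \<omega> (kth_point (A \<omega>) k))"
  shows "Measurable.pred M (\<lambda>\<omega>. \<forall>t\<in>A \<omega>. P \<omega> t)"
proof -
  have "Measurable.pred M (\<lambda>\<omega>. \<forall>k. has_point (A \<omega>) k \<longrightarrow> P \<omega> (kth_point (A \<omega>) k))"
    using assms by measurable
  then show ?thesis
    by (rule measurable_cong[THEN iffD1, rotated])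
      (use A Ball_points_iff in \<open>auto simp: random_locally_finite_set_def\<close>)
qed

lemma pred_Bex_points:
  assumes "\<And>k. Measurable.pred M (\<lambda>\<omega>. P \<omega> (kth_point (A \<omega>) k))"
  shows "Measurable.pred M (\<lambda>\<omega>. \<exists>t\<in>A \<omega>. P \<omega> t)"
proof -
  have "Measurable.pred M (\<lambda>\<omega>. \<forall>t\<in>A \<omega>. \<not> P \<omega> t)"
    using assms by (intro pred_Ball_points) measurable
  then have "Measurable.pred M (\<lambda>\<omega>. \<not> (\<forall>t\<in>A \<omega>. \<not> P \<omega> t))" by measurable
  then show ?thesis by simp
qed

end

context
  fixes M :: "'w measure" and I :: "'i set" and r :: "'i \<Rightarrow> real"
    and N :: "'i \<Rightarrow> 'w \<Rightarrow> real set"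
  assumes ppp: "ppp_family M I r N"
begin

lemma ppp_family_prob_space: "prob_space M"
  using ppp unfolding ppp_family_def by simp

lemma ppp_family_indep_counts:
  assumes "J \<subseteq> {(i, a, b). i \<in> I \<and> 0 \<le> a \<and> a < b}"
    and "\<forall>(i, a, b)\<in>J. \<forall>(i', a', b')\<in>J. (i, a, b) \<noteq> (i', a', b') \<longrightarrow> i = i' \<longrightarrow>
           {a<..b} \<inter> {a'<..b'} = {}"
  shows "prob_space.indep_vars M (\<lambda>_. count_space UNIV)
           (\<lambda>(i, a, b) \<omega>. card (N i \<omega> \<inter> {a<..b})) J"
  using ppp assms unfolding ppp_family_def by blast

lemma ppp_family_measurable_count:
  assumes "i \<in> I" "0 \<le> a" "a < b"
  shows "(\<lambda>\<omega>. card (N i \<omega> \<inter> {a<..b})) \<in> measurable M (count_space UNIV)"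
proof -
  have "prob_space.indep_vars M (\<lambda>_. count_space UNIV)
          (\<lambda>(i, a, b) \<omega>. card (N i \<omega> \<inter> {a<..b})) {(i, a, b)}"
    using assms by (intro ppp_family_indep_counts) auto
  then show ?thesis
    unfolding prob_space.indep_vars_def2[OF ppp_family_prob_space] by simp
qed

lemma sets_ppp_family_count:
  assumes "i \<in> I" "0 \<le> a" "a < b"
  shows "{\<omega> \<in> space M. Q (card (N i \<omega> \<inter> {a<..b}))} \<in> sets M"
  using measurable_sets[OF ppp_family_measurable_count[OF assms], of "{n. Q n}"]
  by (simp add: vimage_def Int_def conj_commute)

lemma ppp_family_points:
  assumes "i \<in> I" "\<omega> \<in> space M"
  shows "N i \<omega> \<subseteq> {0<..}" and "finite (N i \<omega> \<inter> {..b})"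
proof -
  have "\<forall>i\<in>I. \<forall>\<omega>\<in>space M. N i \<omega> \<subseteq> {0<..} \<and> (\<forall>b. finite (N i \<omega> \<inter> {..b}))"
    using ppp unfolding ppp_family_def by (elim conjE)
  then show "N i \<omega> \<subseteq> {0<..}" "finite (N i \<omega> \<inter> {..b})" using assms by simp_all
qed

lemma ppp_family_finite_points:
  assumes "i \<in> I" "\<omega> \<in> space M"
  shows "finite (N i \<omega> \<inter> {a<..b})"
  using ppp_family_points(2)[OF assms, of b] by (rule rev_finite_subset) auto

lemma ppp_family_random_locally_finite_set:
  assumes i: "i \<in> I"
  shows "random_locally_finite_set M (N i)"
  unfolding random_locally_finite_set_def
proof (intro conjI allI ballI)
  show "finite (N i \<omega> \<inter> {..b})" if "\<omega> \<in> space M" for \<omega> b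
    using ppp_family_points(2)[OF i that] .
  fix v :: real
  have count: "card (N i \<omega> \<inter> {..v}) = (if v \<le> 0 then 0 else card (N i \<omega> \<inter> {0<..v}))"
    if "\<omega> \<in> space M" for \<omega>
  proof -
    have "N i \<omega> \<inter> {..v} = (if v \<le> 0 then {} else N i \<omega> \<inter> {0<..v})"
      using ppp_family_points(1)[OF i that] by (auto simp: subset_eq)
    then show ?thesis by simp
  qed
  have "(\<lambda>\<omega>. if v \<le> 0 then 0 else card (N i \<omega> \<inter> {0<..v})) \<in> measurable M (count_space UNIV)"
    using ppp_family_measurable_count[OF i, of 0 v] by (cases "v \<le> 0") simp_all
  then show "(\<lambda>\<omega>. card (N i \<omega> \<inter> {..v})) \<in> measurable M (count_space UNIV)"
    by (subst measurable_cong[OF count])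
qed

lemma ppp_family_prob_count:
  assumes "i \<in> I" "0 \<le> a" "a < b"
  shows "measure M {\<omega> \<in> space M. Q (card (N i \<omega> \<inter> {a<..b}))}
         = measure_pmf.prob (poisson_pmf (r i * (b - a))) {n. Q n}"
proof -
  have "distr M (count_space UNIV) (\<lambda>\<omega>. card (N i \<omega> \<inter> {a<..b}))
          = measure_pmf (poisson_pmf (r i * (b - a)))"
    using ppp assms unfolding ppp_family_def by blast
  moreover have "measure M {\<omega> \<in> space M. Q (card (N i \<omega> \<inter> {a<..b}))}
      = measure (distr M (count_space UNIV) (\<lambda>\<omega>. card (N i \<omega> \<inter> {a<..b}))) {n. Q n}"
    by (subst measure_distr[OF ppp_family_measurable_count[OF assms]])
      (auto intro!: arg_cong[where f="measure M"])
  ultimately show ?thesis by simp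
qed

lemma ppp_family_prob_count_indep:
  assumes "i \<in> I" "i' \<in> I" "i \<noteq> i'" "0 \<le> a" "a < b" "0 \<le> a'" "a' < b'"
  shows "measure M {\<omega> \<in> space M. Q (card (N i \<omega> \<inter> {a<..b})) \<and> Q' (card (N i' \<omega> \<inter> {a'<..b'}))}
       = measure M {\<omega> \<in> space M. Q (card (N i \<omega> \<inter> {a<..b}))} *
         measure M {\<omega> \<in> space M. Q' (card (N i' \<omega> \<inter> {a'<..b'}))}"
proof -
  define X where "X = (\<lambda>(i, a, b) \<omega>. card (N i \<omega> \<inter> {a<..b}))"
  define Y where "Y = (\<lambda>j. if j = (i, a, b) then {n. Q n} else {n. Q' n})"
  have ne: "(i, a, b) \<noteq> (i', a', b')" using assms by auto
  have "prob_space.indep_vars M (\<lambda>_. count_space UNIV) X {(i, a, b), (i', a', b')}"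
    unfolding X_def using assms by (intro ppp_family_indep_counts) auto
  then have "measure M (\<Inter>j\<in>{(i, a, b), (i', a', b')}. X j -` Y j \<inter> space M)
      = (\<Prod>j\<in>{(i, a, b), (i', a', b')}. measure M (X j -` Y j \<inter> space M))"
    by (rule prob_space.indep_varsD[OF ppp_family_prob_space]) auto
  moreover have "(\<Inter>j\<in>{(i, a, b), (i', a', b')}. X j -` Y j \<inter> space M)
      = {\<omega> \<in> space M. Q (card (N i \<omega> \<inter> {a<..b})) \<and> Q' (card (N i' \<omega> \<inter> {a'<..b'}))}"
    using ne unfolding X_def Y_def by auto
  moreover have "X (i, a, b) -` Y (i, a, b) \<inter> space M = {\<omega> \<in> space M. Q (card (N i \<omega> \<inter> {a<..b}))}"
    unfolding X_def Y_def by auto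
  moreover have "X (i', a', b') -` Y (i', a', b') \<inter> space M
      = {\<omega> \<in> space M. Q' (card (N i' \<omega> \<inter> {a'<..b'}))}"
    using ne unfolding X_def Y_def by auto
  ultimately show ?thesis using ne by simp
qed

end

lemma poisson_prob_eq_0:
  "0 < \<mu> \<Longrightarrow> measure_pmf.prob (poisson_pmf \<mu>) {n. n = 0} = exp (- \<mu>)"
  by (simp add: measure_pmf_single)

lemma poisson_prob_ge_1:
  assumes "0 < \<mu>"
  shows "measure_pmf.prob (poisson_pmf \<mu>) {n. 1 \<le> n} \<le> \<mu>"
proof -
  have "{n::nat. 1 \<le> n} = UNIV - {0}" by auto
  then have "measure_pmf.prob (poisson_pmf \<mu>) {n. 1 \<le> n} = 1 - exp (- \<mu>)"
    using assms measure_pmf.prob_compl[of "{0}" "poisson_pmf \<mu>"] by (simp add: measure_pmf_single)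
  also have "\<dots> \<le> \<mu>" using exp_ge_add_one_self[of "- \<mu>"] by simp
  finally show ?thesis .
qed

lemma poisson_prob_ge_2:
  assumes "0 < \<mu>"
  shows "measure_pmf.prob (poisson_pmf \<mu>) {n. 2 \<le> n} \<le> \<mu>\<^sup>2"
proof -
  have "{n::nat. 2 \<le> n} = UNIV - {0, 1}" by auto
  then have "measure_pmf.prob (poisson_pmf \<mu>) {n. 2 \<le> n} = 1 - (1 + \<mu>) * exp (- \<mu>)"
    using assms measure_pmf.prob_compl[of "{0, 1}" "poisson_pmf \<mu>"]
    by (simp add: measure_measure_pmf_finite algebra_simps)
  also have "\<dots> \<le> 1 - (1 + \<mu>) * (1 - \<mu>)"
    using assms exp_ge_add_one_self[of "- \<mu>"] by (intro diff_left_mono mult_left_mono) auto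
  also have "\<dots> = \<mu>\<^sup>2" by (simp add: algebra_simps power2_eq_square)
  finally show ?thesis .
qed

definition onsets_recovered :: "'v set \<Rightarrow> real \<Rightarrow> ('v fibre \<Rightarrow> real set) \<Rightarrow> bool" where
  "onsets_recovered V T P \<longleftrightarrow> (\<forall>x\<in>V. \<forall>t\<in>P (Ons x). t \<le> T \<longrightarrow>
     (\<exists>t'>t. t' \<in> P (Rec x) \<and> (\<forall>y\<in>V. P (Ons y) \<inter> {t<..t'} = {})))"

definition window_clash :: "('v \<Rightarrow> real set) \<Rightarrow> 'v \<Rightarrow> 'v \<Rightarrow> real \<Rightarrow> real \<Rightarrow> bool" where
  "window_clash ons x y a b \<longleftrightarrow>
     (if x = y then 2 \<le> card (ons x \<inter> {a<..b})
      else 1 \<le> card (ons x \<inter> {a<..b}) \<and> 1 \<le> card (ons y \<inter> {a<..b}))"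

lemma no_onset_before_recovery:
  assumes fin: "\<And>y. y \<in> V \<Longrightarrow> finite (ons y \<inter> {a<..b})"
    and x: "x \<in> V" and t: "t \<in> ons x" "a < t" and t': "t < t'" "t' \<le> b"
    and no_clash: "\<And>y. y \<in> V \<Longrightarrow> \<not> window_clash ons x y a b"
  shows "\<forall>y\<in>V. ons y \<inter> {t<..t'} = {}"
proof (intro ballI equals0I)
  fix y u assume y: "y \<in> V" and u: "u \<in> ons y \<inter> {t<..t'}"
  have tx: "t \<in> ons x \<inter> {a<..b}" and uy: "u \<in> ons y \<inter> {a<..b}" using t t' u by auto
  show False
  proof (cases "x = y")
    case True
    have "card {t, u} \<le> card (ons x \<inter> {a<..b})"
      using tx uy True fin[OF x] by (intro card_mono) auto
    then show False using no_clash[OF y] u True by (simp add: window_clash_def)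
  next
    case False
    have "1 \<le> card (ons x \<inter> {a<..b})" "1 \<le> card (ons y \<inter> {a<..b})"
      using tx uy fin x y by (auto simp: Suc_le_eq card_gt_0_iff)
    then show False using no_clash[OF y] False by (simp add: window_clash_def)
  qed
qed

lemma window_index:
  fixes t h :: real
  assumes "0 < t" "0 < h"
  obtains k :: nat where "real k * h < t" "t \<le> (real k + 1) * h"
    and "t \<le> T \<Longrightarrow> k \<le> nat \<lceil>T / h\<rceil>"
proof
  define k where "k = nat (\<lceil>t / h\<rceil> - 1)"
  have "1 \<le> \<lceil>t / h\<rceil>" using assms by (simp add: zero_less_ceiling)
  then have k: "real k = real_of_int \<lceil>t / h\<rceil> - 1" unfolding k_def by simp
  have "t \<le> real_of_int \<lceil>t / h\<rceil> * h"
    using mult_right_mono[OF le_of_int_ceiling[of "t / h"], of h] assms by simp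
  moreover have "(real_of_int \<lceil>t / h\<rceil> - 1) * h < t"
    using ceiling_correct[of "t / h"] assms by (simp add: pos_less_divide_eq)
  ultimately show "real k * h < t" "t \<le> (real k + 1) * h"
    unfolding k by simp_all
  show "k \<le> nat \<lceil>T / h\<rceil>" if "t \<le> T"
    using ceiling_mono[OF divide_right_mono[OF that, of h]] assms unfolding k_def by linarith
qed

lemma not_onsets_recovered_window:
  fixes P :: "'v fibre \<Rightarrow> real set" and h :: real
  assumes fin: "\<And>y a b. y \<in> V \<Longrightarrow> finite (P (Ons y) \<inter> {a<..b})"
    and pos: "\<And>x. x \<in> V \<Longrightarrow> P (Ons x) \<subseteq> {0<..}" and h: "0 < h"
    and bad: "\<not> onsets_recovered V T P"
  shows "\<exists>k\<le>nat \<lceil>T / h\<rceil>. \<exists>x\<in>V. \<exists>y\<in>V.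
           card (P (Rec x) \<inter> {(real k + 1) * h<..(real k + 2) * h}) = 0 \<or>
           window_clash (\<lambda>y. P (Ons y)) x y (real k * h) ((real k + 2) * h)"
proof -
  obtain x t where x: "x \<in> V" and t: "t \<in> P (Ons x)" "t \<le> T"
    and no_rec: "\<not> (\<exists>t'>t. t' \<in> P (Rec x) \<and> (\<forall>y\<in>V. P (Ons y) \<inter> {t<..t'} = {}))"
    using bad unfolding onsets_recovered_def by blast
  obtain k :: nat where k: "real k * h < t" "t \<le> (real k + 1) * h" "k \<le> nat \<lceil>T / h\<rceil>"
    using window_index[of t h T] pos[OF x] t h by auto
  show ?thesis
  proof (rule ccontr)
    assume "\<not> ?thesis"
    then have rec: "card (P (Rec x) \<inter> {(real k + 1) * h<..(real k + 2) * h}) \<noteq> 0"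
      and no_clash: "\<And>y. y \<in> V \<Longrightarrow> \<not> window_clash (\<lambda>y. P (Ons y)) x y (real k * h) ((real k + 2) * h)"
      using k(3) x by auto
    obtain t' where t': "t' \<in> P (Rec x)" "(real k + 1) * h < t'" "t' \<le> (real k + 2) * h"
      using rec by (metis card.empty disjoint_iff greaterThanAtMost_iff)
    have "t < t'" using k(2) t'(2) by linarith
    moreover have "\<forall>y\<in>V. P (Ons y) \<inter> {t<..t'} = {}"
      using no_onset_before_recovery[OF fin x t(1) k(1) \<open>t < t'\<close> t'(3) no_clash] by simp
    ultimately show False using no_rec t'(1) by blast
  qed
qed

context
  fixes M :: "'w measure" and V :: "'v set" and E :: "'v set set" and lam \<tau> :: real
    and N :: "'v fibre \<Rightarrow> 'w \<Rightarrow> real set"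
  assumes rep: "graphical_rep M V E lam \<tau> N" and \<tau>: "0 < \<tau>"
begin

lemma graphical_rep_ppp_family:
  "ppp_family M (Rec ` V \<union> Ons ` V \<union> Tr ` E) (\<lambda>i. case i of Rec _ \<Rightarrow> \<tau> | Ons _ \<Rightarrow> 1 | Tr _ \<Rightarrow> lam * \<tau>) N"
  using rep unfolding graphical_rep_def .

lemma graphical_rep_prob_space: "prob_space M"
  using ppp_family_prob_space[OF graphical_rep_ppp_family] .

lemma sets_recovery_count:
  "x \<in> V \<Longrightarrow> 0 \<le> a \<Longrightarrow> a < b \<Longrightarrow> {\<omega> \<in> space M. Q (card (N (Rec x) \<omega> \<inter> {a<..b}))} \<in> sets M"
  by (rule sets_ppp_family_count[OF graphical_rep_ppp_family]) auto

lemma sets_onset_count: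
  "y \<in> V \<Longrightarrow> 0 \<le> a \<Longrightarrow> a < b \<Longrightarrow> {\<omega> \<in> space M. Q (card (N (Ons y) \<omega> \<inter> {a<..b}))} \<in> sets M"
  by (rule sets_ppp_family_count[OF graphical_rep_ppp_family]) auto

lemma sets_window_clash:
  assumes "x \<in> V" "y \<in> V" "0 \<le> a" "a < b"
  shows "{\<omega> \<in> space M. window_clash (\<lambda>y. N (Ons y) \<omega>) x y a b} \<in> sets M"
proof (cases "x = y")
  case True
  then show ?thesis using sets_onset_count[OF assms(1,3,4)] by (simp add: window_clash_def)
next
  case False
  have "{\<omega> \<in> space M. 1 \<le> card (N (Ons x) \<omega> \<inter> {a<..b})} \<inter>
        {\<omega> \<in> space M. 1 \<le> card (N (Ons y) \<omega> \<inter> {a<..b})} \<in> sets M"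
    using assms by (intro sets.Int sets_onset_count)
  then show ?thesis using False by (simp add: window_clash_def Collect_conj_eq Int_assoc Int_left_commute)
qed

lemma prob_no_recovery:
  assumes "x \<in> V" "0 \<le> a" "a < b"
  shows "measure M {\<omega> \<in> space M. card (N (Rec x) \<omega> \<inter> {a<..b}) = 0} = exp (- (\<tau> * (b - a)))"
  using ppp_family_prob_count[OF graphical_rep_ppp_family, of "Rec x" a b "\<lambda>n. n = 0"]
    poisson_prob_eq_0[of "\<tau> * (b - a)"] assms \<tau> by simp

lemma prob_some_onset_le:
  assumes "y \<in> V" "0 \<le> a" "a < b"
  shows "measure M {\<omega> \<in> space M. 1 \<le> card (N (Ons y) \<omega> \<inter> {a<..b})} \<le> b - a"
  using ppp_family_prob_count[OF graphical_rep_ppp_family, of "Ons y" a b "\<lambda>n. 1 \<le> n"]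
    poisson_prob_ge_1[of "b - a"] assms by simp

lemma prob_window_clash:
  assumes "x \<in> V" "y \<in> V" "0 \<le> a" "a < b"
  shows "measure M {\<omega> \<in> space M. window_clash (\<lambda>y. N (Ons y) \<omega>) x y a b} \<le> (b - a)\<^sup>2"
proof (cases "x = y")
  case True
  then show ?thesis
    using ppp_family_prob_count[OF graphical_rep_ppp_family, of "Ons x" a b "\<lambda>n. 2 \<le> n"]
      poisson_prob_ge_2[of "b - a"] assms by (simp add: window_clash_def)
next
  case False
  have "measure M {\<omega> \<in> space M. window_clash (\<lambda>y. N (Ons y) \<omega>) x y a b}
      = measure M {\<omega> \<in> space M. 1 \<le> card (N (Ons x) \<omega> \<inter> {a<..b})} *
        measure M {\<omega> \<in> space M. 1 \<le> card (N (Ons y) \<omega> \<inter> {a<..b})}"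
    using False assms unfolding window_clash_def
    by (simp add: ppp_family_prob_count_indep[OF graphical_rep_ppp_family])
  also have "\<dots> \<le> (b - a) * (b - a)"
    using assms by (intro mult_mono prob_some_onset_le) auto
  finally show ?thesis by (simp add: power2_eq_square)
qed

lemma sets_onsets_recovered:
  assumes V: "finite V"
  shows "{\<omega> \<in> space M. onsets_recovered V T (\<lambda>i. N i \<omega>)} \<in> sets M"
proof -
  note ppp = graphical_rep_ppp_family
  have rlf: "random_locally_finite_set M (N (Ons x))" "random_locally_finite_set M (N (Rec x))"
    if "x \<in> V" for x
    using that by (auto intro: ppp_family_random_locally_finite_set[OF ppp])
  have [measurable]: "(\<lambda>\<omega>. kth_point (N (Ons x) \<omega>) k) \<in> borel_measurable M"
    "(\<lambda>\<omega>. kth_point (N (Rec x) \<omega>) k) \<in> borel_measurable M" if "x \<in> V" for x k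
    using borel_measurable_kth_point[OF rlf(1)[OF that]] borel_measurable_kth_point[OF rlf(2)[OF that]] .
  have "Measurable.pred M (\<lambda>\<omega>. \<forall>x\<in>V. \<forall>t\<in>N (Ons x) \<omega>. t \<le> T \<longrightarrow>
     (\<exists>t'\<in>N (Rec x) \<omega>. t < t' \<and> (\<forall>y\<in>V. \<forall>u\<in>N (Ons y) \<omega>. \<not> (t < u \<and> u \<le> t'))))"
    by (intro pred_intros_finite(3)[OF V] pred_Ball_points[OF rlf(1)] pred_intros_logic
        pred_Bex_points[OF rlf(2)] pred_intros_finite(3)[OF V] pred_Ball_points[OF rlf(1)])
      measurable
  moreover have "onsets_recovered V T P \<longleftrightarrow> (\<forall>x\<in>V. \<forall>t\<in>P (Ons x). t \<le> T \<longrightarrow>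
     (\<exists>t'\<in>P (Rec x). t < t' \<and> (\<forall>y\<in>V. \<forall>u\<in>P (Ons y). \<not> (t < u \<and> u \<le> t'))))" for P
    unfolding onsets_recovered_def disjoint_iff greaterThanAtMost_iff by blast
  ultimately show ?thesis unfolding pred_def by simp
qed

lemma measure_onsets_recovered_ge:
  assumes V: "finite V" and h: "0 < h"
  shows "1 - (real (nat \<lceil>T / h\<rceil>) + 1) * real (card V) ^ 2 * (exp (- (\<tau> * h)) + 4 * h\<^sup>2)
    \<le> measure M {\<omega> \<in> space M. onsets_recovered V T (\<lambda>i. N i \<omega>)}"
proof -
  note ppp = graphical_rep_ppp_family
  define S where "S = {\<omega> \<in> space M. onsets_recovered V T (\<lambda>i. N i \<omega>)}"
  define U where "U = {..nat \<lceil>T / h\<rceil>} \<times> V \<times> V"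
  define W where "W = (\<lambda>(k::nat, x, y).
    {\<omega> \<in> space M. card (N (Rec x) \<omega> \<inter> {(real k + 1) * h<..(real k + 2) * h}) = 0} \<union>
    {\<omega> \<in> space M. window_clash (\<lambda>y. N (Ons y) \<omega>) x y (real k * h) ((real k + 2) * h)})"
  have W: "W p \<in> sets M \<and> measure M (W p) \<le> exp (- (\<tau> * h)) + 4 * h\<^sup>2" if pU: "p \<in> U" for p
  proof -
    obtain k x y where p: "p = (k, x, y)" and xy: "x \<in> V" "y \<in> V"
      using pU unfolding U_def by auto
    have ivl: "0 \<le> (real k + 1) * h" "(real k + 1) * h < (real k + 2) * h"
      "0 \<le> real k * h" "real k * h < (real k + 2) * h" using h by auto
    note sets = sets_recovery_count[OF xy(1) ivl(1,2)] sets_window_clash[OF xy ivl(3,4)]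
    have len: "(real k + 2) * h - (real k + 1) * h = h" "(real k + 2) * h - real k * h = 2 * h"
      by (simp_all add: algebra_simps)
    have "measure M (W p) \<le> exp (- (\<tau> * h)) + (2 * h)\<^sup>2"
      unfolding p W_def prod.case
      using prob_no_recovery[OF xy(1) ivl(1,2)] prob_window_clash[OF xy ivl(3,4)] unfolding len
      by (intro order_trans[OF measure_Un_le[OF sets]] add_mono) simp_all
    then show ?thesis using sets unfolding p W_def prod.case by (simp add: power2_eq_square)
  qed
  have "space M - S \<subseteq> (\<Union>p\<in>U. W p)"
  proof
    fix \<omega> assume \<omega>: "\<omega> \<in> space M - S"
    have "\<exists>k\<le>nat \<lceil>T / h\<rceil>. \<exists>x\<in>V. \<exists>y\<in>V.
           card (N (Rec x) \<omega> \<inter> {(real k + 1) * h<..(real k + 2) * h}) = 0 \<or>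
           window_clash (\<lambda>y. N (Ons y) \<omega>) x y (real k * h) ((real k + 2) * h)"
      using \<omega> h ppp_family_finite_points[OF ppp] ppp_family_points(1)[OF ppp]
      by (intro not_onsets_recovered_window) (auto simp: S_def)
    then show "\<omega> \<in> (\<Union>p\<in>U. W p)" using \<omega> unfolding U_def W_def by fastforce
  qed
  then have "measure M (space M - S) \<le> measure M (\<Union>p\<in>U. W p)"
    using W V unfolding U_def
    by (intro finite_measure.finite_measure_mono[OF prob_space.axioms(1)[OF graphical_rep_prob_space]])
      auto
  also have "\<dots> \<le> (\<Sum>p\<in>U. measure M (W p))"
    using W V unfolding U_def by (intro measure_UNION_le) auto
  also have "\<dots> \<le> real (card U) * (exp (- (\<tau> * h)) + 4 * h\<^sup>2)"
    using W by (intro sum_bounded_above) auto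
  also have "real (card U) = (real (nat \<lceil>T / h\<rceil>) + 1) * real (card V) ^ 2"
    unfolding U_def by (simp add: card_cartesian_product power2_eq_square algebra_simps)
  finally show ?thesis
    using prob_space.prob_compl[OF graphical_rep_prob_space sets_onsets_recovered[OF V]] by (simp add: S_def)
qed

lemma measure_onsets_recovered_ge_sqrt:
  assumes V: "finite V" and T: "0 \<le> T"
  shows "1 - real (card V) ^ 2 * ((T * sqrt \<tau> + 2) * (exp (- sqrt \<tau>) + 4 / \<tau>))
    \<le> measure M {\<omega> \<in> space M. onsets_recovered V T (\<lambda>i. N i \<omega>)}"
proof -
  have h: "0 < 1 / sqrt \<tau>" "T / (1 / sqrt \<tau>) = T * sqrt \<tau>" "\<tau> * (1 / sqrt \<tau>) = sqrt \<tau>"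
    "4 * (1 / sqrt \<tau>)\<^sup>2 = 4 / \<tau>"
    using \<tau> by (simp_all add: real_div_sqrt power_divide)
  have "real (nat \<lceil>T * sqrt \<tau>\<rceil>) + 1 \<le> T * sqrt \<tau> + 2"
    using ceiling_correct[of "T * sqrt \<tau>"] T \<tau> by simp
  then have "1 - real (card V) ^ 2 * ((T * sqrt \<tau> + 2) * (exp (- sqrt \<tau>) + 4 / \<tau>))
      \<le> 1 - (real (nat \<lceil>T * sqrt \<tau>\<rceil>) + 1) * real (card V) ^ 2 * (exp (- sqrt \<tau>) + 4 / \<tau>)"
    using \<tau> by (simp only: ac_simps) (intro diff_left_mono mult_left_mono mult_right_mono; simp)
  also have "\<dots> \<le> measure M {\<omega> \<in> space M. onsets_recovered V T (\<lambda>i. N i \<omega>)}"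
    using measure_onsets_recovered_ge[OF V h(1), of T] unfolding h .
  finally show ?thesis .
qed

end

theorem lemma1:
  fixes V :: "'v set" and E :: "'v set set" and lam T :: real
    and M :: "real \<Rightarrow> 'w measure"
    and N :: "real \<Rightarrow> 'v fibre \<Rightarrow> 'w \<Rightarrow> real set"
  assumes "finite_graph V E" and "lam > 0" and "T > 0"
    and "\<forall>\<tau>>0. graphical_rep (M \<tau>) V E lam \<tau> (N \<tau>)"
  shows "((\<lambda>\<tau>. measure (M \<tau>)
            {\<omega> \<in> space (M \<tau>). \<forall>x\<in>V. \<forall>t\<in>N \<tau> (Ons x) \<omega>. t \<le> T \<longrightarrow>
               (\<exists>t'>t. t' \<in> N \<tau> (Rec x) \<omega> \<and> (\<forall>y\<in>V. N \<tau> (Ons y) \<omega> \<inter> {t<..t'} = {}))})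
          \<longlongrightarrow> 1) at_top"
proof -
  have V: "finite V" using assms(1) unfolding finite_graph_def by simp
  define g where "g = (\<lambda>\<tau>. 1 - real (card V) ^ 2 * ((T * sqrt \<tau> + 2) * (exp (- sqrt \<tau>) + 4 / \<tau>)))"
  have "((\<lambda>\<tau>. real (card V) ^ 2 * ((T * sqrt \<tau> + 2) * (exp (- sqrt \<tau>) + 4 / \<tau>))) \<longlongrightarrow> 0) at_top"
    by (rule tendsto_mult_right_zero) real_asymp
  then have "(g \<longlongrightarrow> 1 - 0) at_top"
    unfolding g_def by (intro tendsto_diff tendsto_const)
  then have lim: "(g \<longlongrightarrow> 1) at_top" by simp
  define P where "P = (\<lambda>\<tau>. measure (M \<tau>) {\<omega> \<in> space (M \<tau>). onsets_recovered V T (\<lambda>i. N \<tau> i \<omega>)})"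
  have bounds: "g \<tau> \<le> P \<tau>" "P \<tau> \<le> 1" if "0 < \<tau>" for \<tau>
  proof -
    have rep: "graphical_rep (M \<tau>) V E lam \<tau> (N \<tau>)" using assms(4) that by simp
    show "g \<tau> \<le> P \<tau>"
      unfolding g_def P_def using measure_onsets_recovered_ge_sqrt[OF rep that V] assms(3) by simp
    show "P \<tau> \<le> 1"
      unfolding P_def using prob_space.prob_le_1[OF graphical_rep_prob_space[OF rep that]] .
  qed
  have lower: "\<forall>\<^sub>F \<tau> in at_top. g \<tau> \<le> P \<tau>" and upper: "\<forall>\<^sub>F \<tau> in at_top. P \<tau> \<le> 1"
    by (auto intro: eventually_mono[OF eventually_gt_at_top[of 0]] bounds)
  show ?thesis
    using lower upper lim unfolding P_def onsets_recovered_def by (rule tendsto_sandwich[OF _ _ _ tendsto_const])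
qed

end
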